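(* Let $\mathcal{P}\subset\mathbb{R}^d$ be a finite set of item vectors, $\bm{q}\in\mathbb{R}^d$, $k>1$ an integer, $\lambda\in[0,1]$, $\mu>0$, and assume $\langle\bm{x},\bm{y}\rangle\ge0$ for all $\bm{x},\bm{y}\in\mathcal{P}\cup\{\bm{q}\}$. Let $\mathcal{N}\subseteq\mathcal{P}$ be nonempty with center $\bm{c}=\frac{1}{|\mathcal{N}|}\sum_{\bm{p}\in\mathcal{N}}\bm{p}$ and radius $r=\max_{\bm{p}\in\mathcal{N}}\|\bm{p}-\bm{c}\|$. Then for every $\mathcal{S}\subseteq\mathcal{P}$, and for $\Delta_f$ equal to either $\Delta_{f_{avg}}$ or $\Delta_{f_{max}}$, $$\max_{\bm{p}\in\mathcal{N}}\Delta_f(\bm{p},\mathcal{S})\le\tfrac{\lambda}{k}\big(\langle\bm{q},\bm{c}\rangle+r\|\bm{q}\|\big).$$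
   Context: $\Delta_{f_{avg}}(\bm{p},\mathcal{S}) = \frac{\lambda}{k}\langle\bm{p},\bm{q}\rangle - \frac{2\mu(1-\lambda)}{k(k-1)}\sum_{\bm{p}'\in\mathcal{S}}\langle\bm{p},\bm{p}'\rangle$ and $\Delta_{f_{max}}(\bm{p},\mathcal{S}) = \frac{\lambda}{k}\langle\bm{p},\bm{q}\rangle - \mu(1-\lambda)\big(\max_{\bm{p}_x\ne\bm{p}_y\in\mathcal{S}\cup\{\bm{p}\}}\langle\bm{p}_x,\bm{p}_y\rangle - \max_{\bm{p}_x\ne\bm{p}_y\in\mathcal{S}}\langle\bm{p}_x,\bm{p}_y\rangle\big)$, where a maximum over an empty collection of pairs is taken to be $0$. These are the marginal gains of the diversity-aware objectives $f_{avg}(\mathcal{S}) = \frac{\lambda}{k}\sum_{\bm{p}\in\mathcal{S}}\langle\bm{p},\bm{q}\rangle - \frac{2\mu(1-\lambda)}{k(k-1)}\sum_{\{\bm{p},\bm{p}'\}\subseteq\mathcal{S}}\langle\bm{p},\bm{p}'\rangle$ and $f_{max}(\mathcal{S}) = \frac{\lambda}{k}\sum_{\bm{p}\in\mathcal{S}}\langle\bm{p},\bm{q}\rangle-\mu(1-\lambda)\max_{\bm{p}\ne\bm{p}'\in\mathcal{S}}\langle\bm{p},\bm{p}'\rangle$. The set $\mathcal{N}$ plays the role of a node of a ball tree (BC-Tree) storing its centroid and radius. *)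

theory Defs
  imports "HOL-Analysis.Analysis"
begin

definition max_pair_ip :: "('a::real_inner) set \<Rightarrow> real" where
  "max_pair_ip T =
     (let V = {x \<bullet> y | x y. x \<in> T \<and> y \<in> T \<and> x \<noteq> y}
      in if V = {} then 0 else Max V)"

definition delta_avg :: "real \<Rightarrow> real \<Rightarrow> nat \<Rightarrow> ('a::real_inner) \<Rightarrow> 'a \<Rightarrow> 'a set \<Rightarrow> real" where
  "delta_avg lam mu k q p S =
     lam / real k * (p \<bullet> q)
     - 2 * mu * (1 - lam) / (real k * (real k - 1)) * (\<Sum>p'\<in>S. p \<bullet> p')"

definition delta_max :: "real \<Rightarrow> real \<Rightarrow> nat \<Rightarrow> ('a::real_inner) \<Rightarrow> 'a \<Rightarrow> 'a set \<Rightarrow> real" where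
  "delta_max lam mu k q p S =
     lam / real k * (p \<bullet> q)
     - mu * (1 - lam) * (max_pair_ip (S \<union> {p}) - max_pair_ip S)"

definition centroid :: "('a::real_vector) set \<Rightarrow> 'a" where
  "centroid N = (1 / real (card N)) *\<^sub>R (\<Sum>p\<in>N. p)"

definition radius :: "('a::real_normed_vector) set \<Rightarrow> real" where
  "radius N = Max ((\<lambda>p. norm (p - centroid N)) ` N)"

end

theory Submission
  imports Defs
begin

(* Both marginal gains are the relevance term lam/k <p,q> minus a diversity penalty that is
   nonnegative when all inner products are: the pairwise sum is a sum of nonnegative terms, and
   adding p to S can only enlarge the set of pair values whose maximum is taken.  The relevance
   term is bounded through <p,q> = <c,q> + <p - c,q> and Cauchy-Schwarz, using |p - c| <= r. *)

lemma max_pair_ip_mono: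
  fixes S T :: "('a::real_inner) set"
  assumes "finite T" and "S \<subseteq> T" and "\<forall>x\<in>T. \<forall>y\<in>T. 0 \<le> x \<bullet> y"
  shows "max_pair_ip S \<le> max_pair_ip T"
proof -
  define VS where "VS = {x \<bullet> y | x y. x \<in> S \<and> y \<in> S \<and> x \<noteq> y}"
  define VT where "VT = {x \<bullet> y | x y. x \<in> T \<and> y \<in> T \<and> x \<noteq> y}"
  have "VT \<subseteq> (\<lambda>(x, y). x \<bullet> y) ` (T \<times> T)"
    unfolding VT_def by auto
  then have finite_VT: "finite VT"
    using \<open>finite T\<close> finite_subset by blast
  have "VS \<subseteq> VT"
    unfolding VS_def VT_def using \<open>S \<subseteq> T\<close> by blast
  have VT_nonneg: "0 \<le> v" if "v \<in> VT" for v
    using that assms(3) unfolding VT_def by auto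
  have max_pair_ip_T: "max_pair_ip T = (if VT = {} then 0 else Max VT)"
    unfolding max_pair_ip_def VT_def by simp
  have max_pair_ip_S: "max_pair_ip S = (if VS = {} then 0 else Max VS)"
    unfolding max_pair_ip_def VS_def by simp
  show ?thesis
  proof (cases "VS = {}")
    case True
    have "0 \<le> Max VT" if "VT \<noteq> {}"
      using Max_in[OF finite_VT that] VT_nonneg by blast
    then show ?thesis
      unfolding max_pair_ip_S max_pair_ip_T using True by simp
  next
    case False
    then show ?thesis
      unfolding max_pair_ip_S max_pair_ip_T
      using \<open>VS \<subseteq> VT\<close> Max_mono[OF \<open>VS \<subseteq> VT\<close> False finite_VT] by auto
  qed
qed

lemma inner_le_inner_centre_plus_radius:
  fixes p q c :: "'a::real_inner"
  assumes "norm (p - c) \<le> r"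
  shows "p \<bullet> q \<le> q \<bullet> c + r * norm q"
proof -
  have "p \<bullet> q = c \<bullet> q + (p - c) \<bullet> q"
    by (simp add: inner_diff_left)
  also have "(p - c) \<bullet> q \<le> norm (p - c) * norm q"
    using Cauchy_Schwarz_ineq2 abs_ge_self order_trans by blast
  also have "\<dots> \<le> r * norm q"
    using assms by (simp add: mult_right_mono)
  finally show ?thesis
    by (simp add: inner_commute)
qed

lemma norm_diff_centroid_le_radius:
  assumes "finite N" and "p \<in> N"
  shows "norm (p - centroid N) \<le> radius N"
  unfolding radius_def using assms by (auto intro: Max_ge)

lemma delta_avg_le_relevance:
  assumes "k > 1" and "lam \<le> 1" and "0 \<le> mu" and "\<forall>p'\<in>S. 0 \<le> p \<bullet> p'"
  shows "delta_avg lam mu k q p S \<le> lam / real k * (p \<bullet> q)"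
proof -
  have "0 \<le> 2 * mu * (1 - lam) / (real k * (real k - 1))"
    using assms(1-3) by simp
  moreover have "0 \<le> (\<Sum>p'\<in>S. p \<bullet> p')"
    using assms(4) by (simp add: sum_nonneg)
  ultimately have "0 \<le> 2 * mu * (1 - lam) / (real k * (real k - 1)) * (\<Sum>p'\<in>S. p \<bullet> p')"
    by (rule mult_nonneg_nonneg)
  then show ?thesis
    unfolding delta_avg_def by linarith
qed

lemma delta_max_le_relevance:
  assumes "finite S" and "lam \<le> 1" and "0 \<le> mu"
    and "\<forall>x\<in>S \<union> {p}. \<forall>y\<in>S \<union> {p}. 0 \<le> x \<bullet> y"
  shows "delta_max lam mu k q p S \<le> lam / real k * (p \<bullet> q)"
proof -
  have "max_pair_ip S \<le> max_pair_ip (S \<union> {p})"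
    using assms(1,4) by (intro max_pair_ip_mono) auto
  moreover have "0 \<le> mu * (1 - lam)"
    using assms(2,3) by simp
  ultimately have "0 \<le> mu * (1 - lam) * (max_pair_ip (S \<union> {p}) - max_pair_ip S)"
    by simp
  then show ?thesis
    unfolding delta_max_def by linarith
qed

theorem theorem4:
  fixes P N S :: "(real ^ 'd) set" and q :: "real ^ 'd"
    and k :: nat and lam mu :: real
  assumes "finite P"
    and "k > 1"
    and "0 \<le> lam" and "lam \<le> 1"
    and "mu > 0"
    and "\<forall>x \<in> P \<union> {q}. \<forall>y \<in> P \<union> {q}. x \<bullet> y \<ge> 0"
    and "N \<subseteq> P" and "N \<noteq> {}"
    and "S \<subseteq> P"
  shows "Max ((\<lambda>p. delta_avg lam mu k q p S) ` N)
           \<le> lam / real k * (q \<bullet> centroid N + radius N * norm q)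
       \<and> Max ((\<lambda>p. delta_max lam mu k q p S) ` N)
           \<le> lam / real k * (q \<bullet> centroid N + radius N * norm q)"
proof -
  let ?bound = "lam / real k * (q \<bullet> centroid N + radius N * norm q)"
  have "finite N" "finite S"
    using assms(1,7,9) finite_subset by blast+
  have relevance_le: "lam / real k * (p \<bullet> q) \<le> ?bound" if "p \<in> N" for p
    using inner_le_inner_centre_plus_radius[OF norm_diff_centroid_le_radius[OF \<open>finite N\<close> that]]
      assms(3) by (intro mult_left_mono) simp_all
  have inner_nonneg: "\<forall>x\<in>S \<union> {p}. \<forall>y\<in>S \<union> {p}. 0 \<le> x \<bullet> y" if "p \<in> N" for p
    using assms(6,7,9) that by blast
  have "delta_avg lam mu k q p S \<le> ?bound" if "p \<in> N" for p
    using delta_avg_le_relevance[of k lam mu S p q] inner_nonneg[OF that] relevance_le[OF that]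
      assms(2,4,5) by fastforce
  moreover have "delta_max lam mu k q p S \<le> ?bound" if "p \<in> N" for p
    using delta_max_le_relevance[OF \<open>finite S\<close> assms(4) _ inner_nonneg[OF that], of mu k q]
      relevance_le[OF that] assms(5) by linarith
  ultimately show ?thesis
    using \<open>finite N\<close> \<open>N \<noteq> {}\<close> by (simp add: Max_le_iff)
qed

end
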